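(* Let $A\in\mathbb{R}^{n\times m}$ have distinct columns with $a_1=0$, let $c\in\mathbb{R}^m$ and $f=\mathrm{Sig}(A,c)$. Then $$\sup\{\gamma\in\mathbb{R} : c-\gamma e_1\in C_{\mathrm{SAGE}}(A)\}=\inf\{c^\top v : v\in C_{\mathrm{SAGE}}(A)^\dagger,\ v_1=1\},$$ i.e. strong duality holds between the primal and dual formulations of $f_{\mathsf{SAGE}}$ (with the conventions $\sup\emptyset=-\infty$).
   Context: Let $A\in\mathbb{R}^{n\times m}$ have distinct columns $a_1,\dots,a_m$. For $c\in\mathbb{R}^m$, $\mathrm{Sig}(A,c)$ denotes the function $x\mapsto\sum_{i=1}^m c_i\exp(a_i^\top x)$ on $\mathbb{R}^n$. $C_{\mathrm{NNS}}(A)=\{c\in\mathbb{R}^m:\mathrm{Sig}(A,c)(x)\ge 0\ \forall x\in\mathbb{R}^n\}$. For $k\in[m]$, the $k$-th AGE cone is $C_{\mathrm{AGE}}(A,k)=\{c\in C_{\mathrm{NNS}}(A): c_i\ge 0\ \forall i\ne k\}$, and the SAGE cone is the Minkowski sum $C_{\mathrm{SAGE}}(A)=\sum_{k=1}^m C_{\mathrm{AGE}}(A,k)$. For a convex cone $K\subset\mathbb{R}^m$, $K^\dagger=\{y: y^\top x\ge 0\ \forall x\in K\}$. $e_1$ is the first standard basis vector. *)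

theory Defs
  imports "HOL-Analysis.Analysis"
begin

(* Convention: m columns indexed 0..m-1 (index 0 plays the role of the paper's index 1).
   Columns a i :: real^'n.  Vectors in R^m are functions nat => real vanishing outside {..<m}. *)

definition Rm :: "nat \<Rightarrow> (nat \<Rightarrow> real) set" where
  "Rm m = {c. \<forall>i\<ge>m. c i = 0}"

definition Sig :: "nat \<Rightarrow> (nat \<Rightarrow> real^'n) \<Rightarrow> (nat \<Rightarrow> real) \<Rightarrow> real^'n \<Rightarrow> real" where
  "Sig m a c x = (\<Sum>i<m. c i * exp (a i \<bullet> x))"

definition C_NNS :: "nat \<Rightarrow> (nat \<Rightarrow> real^'n) \<Rightarrow> (nat \<Rightarrow> real) set" where
  "C_NNS m a = {c \<in> Rm m. \<forall>x. Sig m a c x \<ge> 0}"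

definition C_AGE :: "nat \<Rightarrow> (nat \<Rightarrow> real^'n) \<Rightarrow> nat \<Rightarrow> (nat \<Rightarrow> real) set" where
  "C_AGE m a k = {c \<in> C_NNS m a. \<forall>i<m. i \<noteq> k \<longrightarrow> c i \<ge> 0}"

definition C_SAGE :: "nat \<Rightarrow> (nat \<Rightarrow> real^'n) \<Rightarrow> (nat \<Rightarrow> real) set" where
  "C_SAGE m a = {(\<lambda>i. \<Sum>k<m. cs k i) | cs. \<forall>k<m. cs k \<in> C_AGE m a k}"

definition dual_cone :: "nat \<Rightarrow> (nat \<Rightarrow> real) set \<Rightarrow> (nat \<Rightarrow> real) set" where
  "dual_cone m K = {y \<in> Rm m. \<forall>x\<in>K. (\<Sum>i<m. y i * x i) \<ge> 0}"

definition e1 :: "nat \<Rightarrow> real" where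
  "e1 = (\<lambda>i. if i = 0 then 1 else 0)"

end

theory Submission
  imports Defs
begin

text \<open>Weak duality is immediate from the definition of the dual cone.  For the converse the key
  fact is that \<open>C_SAGE\<close> is a closed convex cone.  Each AGE cone is closed, and the sum of the AGE cones
  is pointed: in an AGE vector with a positive coefficient \<open>c i\<close>, moving along \<open>a i - a k\<close> lets that
  term outgrow the only negative one, so nonnegative signomials from AGE cones can cancel only if they
  are all zero.  Hence decompositions of a bounded set of SAGE vectors are bounded, and compactness gives
  closedness.  If \<open>\<gamma>\<close> lay strictly between the two optimal values, projecting \<open>c - \<gamma> e1\<close> onto the
  cone would give a separating dual vector \<open>v\<close> with \<open>v 0 \<ge> 0\<close> (as \<open>e1\<close> lies in the cone);
  normalising it, or adding a large multiple of it to the all-ones dual vector when \<open>v 0 = 0\<close>,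
  yields a dual feasible point of value below \<open>\<gamma>\<close>.\<close>

section \<open>Closed convex cones in \<open>Rm m\<close> and separation\<close>

lemma continuous_on_coordinate [continuous_intros]:
  "continuous_on S (\<lambda>c::'a \<Rightarrow> 'b::topological_space. c i)"
  by (rule continuous_on_product_then_coordinatewise[OF continuous_on_id])

lemma continuous_on_coordinate2 [continuous_intros]:
  "continuous_on S (\<lambda>c::'a \<Rightarrow> 'b \<Rightarrow> 'c::topological_space. c k i)"
  using continuous_on_product_then_coordinatewise[OF continuous_on_coordinate[of S k], of i] by simp

lemma compact_Pi_UNIV:
  assumes "\<And>i. compact (S i)"
  shows "compact (Pi UNIV S :: ('a \<Rightarrow> 'b::topological_space) set)"
proof -
  have "Pi UNIV S = PiE UNIV S" by auto
  moreover have "compactin (product_topology (\<lambda>i. euclidean) UNIV) (PiE UNIV S)"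
    using assms by (simp add: compactin_PiE compactin_euclidean_iff)
  ultimately show ?thesis
    by (simp add: euclidean_product_topology compactin_euclidean_iff)
qed

lemma compact_if_closed_subset_Pi:
  assumes "closed L" "L \<subseteq> Pi UNIV S" "\<And>i. compact (S i)"
  shows "compact L"
proof -
  have "L = Pi UNIV S \<inter> L" using assms(2) by blast
  also have "compact \<dots>" by (intro compact_Int_closed compact_Pi_UNIV assms(1,3))
  finally show ?thesis .
qed

lemma closed_Rm: "closed (Rm m)"
proof -
  have "Rm m = (\<Inter>i\<in>{m..}. {c. c i = 0})"
    by (auto simp: Rm_def)
  also have "closed \<dots>"
    by (intro closed_INT ballI closed_Collect_eq continuous_intros)
  finally show ?thesis .
qed

definition convex_cone_in :: "nat \<Rightarrow> (nat \<Rightarrow> real) set \<Rightarrow> bool" where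
  "convex_cone_in m K \<longleftrightarrow> K \<subseteq> Rm m \<and> (\<lambda>i. 0) \<in> K
     \<and> (\<forall>x\<in>K. \<forall>y\<in>K. (\<lambda>i. x i + y i) \<in> K) \<and> (\<forall>x\<in>K. \<forall>r\<ge>0. (\<lambda>i. r * x i) \<in> K)"

lemma nonneg_if_quadratic_nonneg:
  fixes A B :: real
  assumes h: "\<And>t. 0 < t \<Longrightarrow> t \<le> 1 \<Longrightarrow> 0 \<le> 2*t*A + t^2*B" and B: "B \<ge> 0"
  shows "A \<ge> 0"
proof (rule ccontr)
  assume "\<not> A \<ge> 0"
  then have A: "A < 0" by simp
  define t where "t = min 1 (-A/(B+1))"
  have t: "0 < t" "t \<le> 1" using A B by (auto simp: t_def divide_neg_pos)
  have "t * B \<le> (-A/(B+1)) * B" using B by (intro mult_right_mono) (auto simp: t_def)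
  also have "\<dots> \<le> -A" using A B by (simp add: field_simps)
  finally have "2*t*A + t^2*B = t * (2*A + t*B)" "t * B \<le> -A"
    by (simp_all add: power2_eq_square algebra_simps)
  then have "2*t*A + t^2*B < 0" using t A by (simp add: mult_pos_neg)
  with h[OF t] show False by simp
qed

lemma closed_convex_cone_separation:
  assumes K: "convex_cone_in m K" "closed K" and z: "z \<in> Rm m" "z \<notin> K"
  shows "\<exists>v\<in>Rm m. (\<forall>x\<in>K. (\<Sum>i<m. v i * x i) \<ge> 0) \<and> (\<Sum>i<m. v i * z i) < 0"
proof -
  define f where "f = (\<lambda>x::nat\<Rightarrow>real. \<Sum>i<m. (x i - z i)^2)"
  have f_cont: "continuous_on S f" for S unfolding f_def by (intro continuous_intros)
  define L where "L = K \<inter> {x. f x \<le> f (\<lambda>i. 0)}"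
  define R where "R = (\<Sum>i<m. \<bar>z i\<bar>) + 1 + f (\<lambda>i. 0)"
  have bound: "\<bar>x i\<bar> \<le> R" if xL: "x \<in> L" for x i
  proof (cases "i < m")
    case True
    have "(x i - z i)^2 \<le> f x" unfolding f_def
      by (rule member_le_sum[where f="\<lambda>i. (x i - z i)^2"]) (use True in auto)
    also have "\<dots> \<le> f (\<lambda>i. 0)" using xL by (simp add: L_def)
    finally have "(x i - z i)^2 \<le> f (\<lambda>i. 0)" .
    moreover have "\<bar>z i\<bar> \<le> (\<Sum>i<m. \<bar>z i\<bar>)"
      by (rule member_le_sum[where f="\<lambda>i. \<bar>z i\<bar>"]) (use True in auto)
    moreover have "\<bar>x i - z i\<bar> \<le> 1 + (x i - z i)^2"
    proof -
      have "\<bar>u\<bar> \<le> 1 + u^2" for u :: real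
      proof -
        have "0 \<le> (\<bar>u\<bar> - 1)^2" by simp
        then show ?thesis by (simp add: power2_eq_square algebra_simps)
      qed
      then show ?thesis .
    qed
    moreover have "\<bar>x i\<bar> \<le> \<bar>z i\<bar> + \<bar>x i - z i\<bar>" by linarith
    ultimately show ?thesis unfolding R_def by linarith
  next
    case False
    then have "x i = 0" using xL K(1) by (auto simp: L_def convex_cone_in_def Rm_def)
    moreover have "0 \<le> f (\<lambda>i. 0)" unfolding f_def by (intro sum_nonneg) auto
    ultimately show ?thesis by (simp add: R_def sum_nonneg)
  qed
  have "compact L"
  proof (rule compact_if_closed_subset_Pi)
    show "closed L"
      unfolding L_def by (intro closed_Int K(2) closed_Collect_le f_cont continuous_on_const)
    show "L \<subseteq> Pi UNIV (\<lambda>i. {-R..R})"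
    proof (intro subsetI Pi_I)
      fix x i assume "x \<in> L"
      then show "x i \<in> {-R..R}" using bound[of x i] by (auto simp: abs_le_iff)
    qed
  qed (rule compact_Icc)
  moreover have "(\<lambda>i. 0) \<in> L" using K(1) by (simp add: L_def convex_cone_in_def)
  ultimately obtain p where pL: "p \<in> L" and p_min_L: "\<forall>y\<in>L. f p \<le> f y"
    using continuous_attains_inf[OF _ _ f_cont] by blast
  have pK: "p \<in> K" using pL by (simp add: L_def)
  have p_min: "f p \<le> f x" if "x \<in> K" for x
    using p_min_L pL that by (cases "f x \<le> f (\<lambda>i. 0)") (auto simp: L_def)
  define v where "v = (\<lambda>i. p i - z i)"
  have vR: "v \<in> Rm m" using pK z(1) K(1) by (auto simp: Rm_def v_def convex_cone_in_def)
  txt \<open>\<open>p\<close> is the projection of \<open>z\<close> onto \<open>K\<close>; first-order optimality along feasible directions:\<close>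
  have feasible_dir: "(\<Sum>i<m. v i * y i) \<ge> 0"
    if hy: "\<And>t. 0 < t \<Longrightarrow> t \<le> 1 \<Longrightarrow> (\<lambda>i. p i + t * y i) \<in> K" for y
  proof (rule nonneg_if_quadratic_nonneg[where B="\<Sum>i<m. (y i)^2"])
    fix t :: real assume t: "0 < t" "t \<le> 1"
    have "\<And>i. (p i + t * y i - z i)^2 = (p i - z i)^2 + (2*t*((p i - z i) * y i) + t^2 * (y i)^2)"
      by (simp add: power2_eq_square algebra_simps)
    then have "f (\<lambda>i. p i + t * y i) = f p + (2*t*(\<Sum>i<m. v i * y i) + t^2 * (\<Sum>i<m. (y i)^2))"
      unfolding f_def v_def by (simp add: sum.distrib sum_distrib_left mult.assoc)
    moreover have "f p \<le> f (\<lambda>i. p i + t * y i)" using p_min hy[OF t] by blast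
    ultimately show "0 \<le> 2*t*(\<Sum>i<m. v i * y i) + t^2 * (\<Sum>i<m. (y i)^2)" by linarith
  qed (intro sum_nonneg, auto)
  have vK: "(\<Sum>i<m. v i * x i) \<ge> 0" if "x \<in> K" for x
    by (rule feasible_dir) (use K(1) pK that in \<open>auto simp: convex_cone_in_def\<close>)
  have "(\<Sum>i<m. v i * (- p i)) \<ge> 0"
  proof (rule feasible_dir)
    fix t :: real assume "0 < t" "t \<le> 1"
    moreover have "(\<lambda>i. p i + t * - p i) = (\<lambda>i. (1 - t) * p i)" by (auto simp: algebra_simps)
    ultimately show "(\<lambda>i. p i + t * - p i) \<in> K" using K(1) pK by (simp add: convex_cone_in_def)
  qed
  then have vp: "(\<Sum>i<m. v i * p i) = 0" using vK[OF pK] by (simp add: sum_negf)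
  have "\<exists>i<m. v i \<noteq> 0"
  proof (rule ccontr)
    assume "\<not> (\<exists>i<m. v i \<noteq> 0)"
    then have "p = z" using vR pK z(1) K(1)
      by (auto simp: v_def Rm_def fun_eq_iff convex_cone_in_def) (metis not_le)
    with pK z(2) show False by simp
  qed
  then obtain i where i: "i < m" "v i \<noteq> 0" by blast
  have "0 < v i * v i" using i(2) not_real_square_gt_zero by blast
  also have "v i * v i \<le> (\<Sum>i<m. v i * v i)"
    by (rule member_le_sum[where f="\<lambda>i. v i * v i"]) (use i in auto)
  also have "(\<Sum>i<m. v i * v i) = (\<Sum>i<m. v i * p i) - (\<Sum>i<m. v i * z i)"
    by (simp add: v_def sum_subtractf[symmetric] algebra_simps)
  finally have "(\<Sum>i<m. v i * z i) < 0" using vp by linarith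
  with vR vK show ?thesis by blast
qed

section \<open>Conic strong duality\<close>

lemma sum_e1: "0 < m \<Longrightarrow> (\<Sum>i<m. v i * e1 i) = v 0"
  by (simp add: e1_def if_distrib sum.delta cong: if_cong)

lemma sum_shift_e1:
  assumes "0 < m"
  shows "(\<Sum>i<m. v i * (c i - \<gamma> * e1 i)) = (\<Sum>i<m. c i * v i) - \<gamma> * v 0"
proof -
  have "(\<Sum>i<m. v i * (c i - \<gamma> * e1 i)) = (\<Sum>i<m. c i * v i) - \<gamma> * (\<Sum>i<m. v i * e1 i)"
    by (simp add: sum_subtractf sum_distrib_left algebra_simps)
  with sum_e1[OF assms] show ?thesis by simp
qed

lemma dual_cone_lincomb:
  assumes "u \<in> dual_cone m K" "v \<in> dual_cone m K" "s \<ge> 0" "t \<ge> 0"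
  shows "(\<lambda>i. s * u i + t * v i) \<in> dual_cone m K"
proof -
  have "(\<Sum>i<m. (s * u i + t * v i) * x i) = s * (\<Sum>i<m. u i * x i) + t * (\<Sum>i<m. v i * x i)" for x
    by (simp add: sum.distrib sum_distrib_left algebra_simps)
  with assms show ?thesis by (auto simp: dual_cone_def Rm_def)
qed

lemma weak_duality:
  assumes "0 < m" "(\<lambda>i. c i - \<gamma> * e1 i) \<in> K" "v \<in> dual_cone m K" "v 0 = 1"
  shows "\<gamma> \<le> (\<Sum>i<m. c i * v i)"
proof -
  have "0 \<le> (\<Sum>i<m. v i * (c i - \<gamma> * e1 i))"
    using assms(2,3) by (auto simp: dual_cone_def)
  with sum_shift_e1[OF assms(1)] assms(4) show ?thesis by simp
qed

text \<open>If the separating functional \<open>v\<close> has \<open>v 0 = 0\<close>, it is added with a large weight to \<open>w\<close>.\<close>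
lemma normalized_dual_below:
  assumes v: "v \<in> dual_cone m K" "v 0 \<ge> 0" "(\<Sum>i<m. c i * v i) < \<gamma> * v 0"
    and w: "w \<in> dual_cone m K" "w 0 = 1"
  shows "\<exists>u\<in>dual_cone m K. u 0 = 1 \<and> (\<Sum>i<m. c i * u i) < \<gamma>"
proof (cases "v 0 = 0")
  case False
  then have v0: "v 0 > 0" using v(2) by simp
  define u where "u = (\<lambda>i. 0 * w i + (1 / v 0) * v i)"
  have "u \<in> dual_cone m K" unfolding u_def using v0 by (intro dual_cone_lincomb v(1) w(1)) auto
  moreover have "(\<Sum>i<m. c i * u i) = (\<Sum>i<m. c i * v i) / v 0"
    by (simp add: u_def sum_divide_distrib)
  moreover have "(\<Sum>i<m. c i * v i) / v 0 < \<gamma>" using v(3) v0 by (simp add: pos_divide_less_eq)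
  ultimately show ?thesis using v0 by (intro bexI[of _ u]) (auto simp: u_def)
next
  case True
  define t where "t = (\<bar>\<Sum>i<m. c i * w i\<bar> + \<bar>\<gamma>\<bar> + 1) / - (\<Sum>i<m. c i * v i)"
  define u where "u = (\<lambda>i. 1 * w i + t * v i)"
  have V: "(\<Sum>i<m. c i * v i) < 0" using v(3) True by simp
  then have t: "t \<ge> 0" unfolding t_def by (intro divide_nonneg_pos) auto
  have "u \<in> dual_cone m K" unfolding u_def using t by (intro dual_cone_lincomb v(1) w(1)) auto
  moreover have "(\<Sum>i<m. c i * u i) = (\<Sum>i<m. c i * w i) + t * (\<Sum>i<m. c i * v i)"
    by (simp add: u_def sum.distrib sum_distrib_left algebra_simps)
  moreover have "t * (\<Sum>i<m. c i * v i) = - (\<bar>\<Sum>i<m. c i * w i\<bar> + \<bar>\<gamma>\<bar> + 1)"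
    using V unfolding t_def by simp
  moreover have "(\<Sum>i<m. c i * w i) - \<bar>\<Sum>i<m. c i * w i\<bar> - \<bar>\<gamma>\<bar> - 1 < \<gamma>" by linarith
  ultimately show ?thesis using True w(2) by (intro bexI[of _ u]) (auto simp: u_def)
qed

theorem closed_convex_cone_duality:
  assumes m: "0 < m" and K: "convex_cone_in m K" "closed K" "e1 \<in> K"
    and w: "w \<in> dual_cone m K" "w 0 = 1" and c: "c \<in> Rm m"
  shows "Sup {ereal \<gamma> | \<gamma>. (\<lambda>i. c i - \<gamma> * e1 i) \<in> K}
       = Inf {ereal (\<Sum>i<m. c i * v i) | v. v \<in> dual_cone m K \<and> v 0 = 1}"
    (is "Sup ?P = Inf ?D")
proof (rule antisym)
  show "Sup ?P \<le> Inf ?D"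
  proof (intro Sup_least Inf_greatest)
    fix x y assume "x \<in> ?P" "y \<in> ?D"
    then show "x \<le> y" using weak_duality[OF m] by auto
  qed
  show "Inf ?D \<le> Sup ?P"
  proof (rule ccontr)
    assume "\<not> Inf ?D \<le> Sup ?P"
    then obtain \<gamma> where \<gamma>: "Sup ?P < ereal \<gamma>" "ereal \<gamma> < Inf ?D"
      using ereal_dense2 by (meson not_le)
    define z where "z = (\<lambda>i. c i - \<gamma> * e1 i)"
    have "z \<notin> K"
      using \<gamma>(1) Sup_upper[of "ereal \<gamma>" ?P] by (auto simp: z_def)
    moreover have "z \<in> Rm m" using c m by (auto simp: z_def Rm_def e1_def)
    ultimately obtain v where v: "v \<in> dual_cone m K" and "(\<Sum>i<m. v i * z i) < 0"
      using closed_convex_cone_separation[OF K(1,2)] by (auto simp: dual_cone_def)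
    moreover have "(\<Sum>i<m. v i * z i) = (\<Sum>i<m. c i * v i) - \<gamma> * v 0"
      unfolding z_def by (rule sum_shift_e1[OF m])
    moreover have "0 \<le> v 0"
      using v K(3) sum_e1[OF m, of v] by (auto simp: dual_cone_def)
    ultimately obtain u where u: "u \<in> dual_cone m K" "u 0 = 1" "(\<Sum>i<m. c i * u i) < \<gamma>"
      using normalized_dual_below[OF v _ _ w] by fastforce
    have "Inf ?D \<le> ereal (\<Sum>i<m. c i * u i)"
      using u(1,2) by (intro Inf_lower) blast
    with \<gamma>(2) have "ereal \<gamma> < ereal (\<Sum>i<m. c i * u i)" by (rule order.strict_trans2)
    with u(3) show False by simp
  qed
qed

section \<open>AGE cones\<close>

lemma Sig_add: "Sig m a (\<lambda>i. c i + d i) x = Sig m a c x + Sig m a d x"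
  unfolding Sig_def by (simp add: sum.distrib algebra_simps)

lemma Sig_scale: "Sig m a (\<lambda>i. r * c i) x = r * Sig m a c x"
  unfolding Sig_def by (simp add: sum_distrib_left mult.assoc)

lemma C_AGE_zero: "(\<lambda>i. 0) \<in> C_AGE m a k"
  by (simp add: C_AGE_def C_NNS_def Rm_def Sig_def)

lemma C_AGE_add: "c \<in> C_AGE m a k \<Longrightarrow> d \<in> C_AGE m a k \<Longrightarrow> (\<lambda>i. c i + d i) \<in> C_AGE m a k"
  by (auto simp: C_AGE_def C_NNS_def Rm_def Sig_add)

lemma C_AGE_scale: "c \<in> C_AGE m a k \<Longrightarrow> r \<ge> 0 \<Longrightarrow> (\<lambda>i. r * c i) \<in> C_AGE m a k"
  by (auto simp: C_AGE_def C_NNS_def Rm_def Sig_scale)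

lemma closed_C_AGE: "closed (C_AGE m a k)"
proof -
  have "C_AGE m a k = Rm m \<inter> (\<Inter>x. {c. 0 \<le> Sig m a c x}) \<inter> (\<Inter>i\<in>{..<m} - {k}. {c. 0 \<le> c i})"
    by (auto simp: C_AGE_def C_NNS_def)
  also have "closed \<dots>"
    unfolding Sig_def
    by (intro closed_Int closed_Rm closed_INT ballI closed_Collect_le continuous_intros)
  finally show ?thesis .
qed

text \<open>Moving along \<open>a i - a k\<close>, a positive term \<open>c i\<close> would outgrow the only negative term \<open>c k\<close>.\<close>
lemma C_AGE_zero_if_Sig_zero:
  assumes inj: "inj_on a {..<m}" and k: "k < m" and c: "c \<in> C_AGE m a k"
    and Sig0: "\<And>x. Sig m a c x = 0"
  shows "\<forall>i<m. c i = 0"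
proof -
  have nonneg: "\<And>j. j < m \<Longrightarrow> j \<noteq> k \<Longrightarrow> 0 \<le> c j" using c by (auto simp: C_AGE_def)
  have Sig_split: "Sig m a c x = c k * exp (a k \<bullet> x) + (\<Sum>j\<in>{..<m}-{k}. c j * exp (a j \<bullet> x))" for x
    unfolding Sig_def using k by (simp add: sum.remove[of "{..<m}" k])
  have off: "c i = 0" if i: "i < m" "i \<noteq> k" for i
  proof (rule ccontr)
    assume "c i \<noteq> 0"
    with nonneg[OF i] have ci: "c i > 0" by simp
    define d where "d = a i - a k"
    have "d \<noteq> 0" using inj i k by (auto simp: d_def inj_on_def)
    then have dd: "d \<bullet> d > 0" by simp
    define t where "t = (\<bar>c k\<bar> + 1) / (c i * (d \<bullet> d))"
    define x where "x = t *\<^sub>R d"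
    have ai: "a i \<bullet> x = a k \<bullet> x + t * (d \<bullet> d)"
      by (simp add: x_def d_def inner_diff_left inner_diff_right algebra_simps)
    have "c i * exp (a i \<bullet> x) \<le> (\<Sum>j\<in>{..<m}-{k}. c j * exp (a j \<bullet> x))"
      by (rule member_le_sum[where f="\<lambda>j. c j * exp (a j \<bullet> x)"]) (use i nonneg in auto)
    also have "\<dots> = - c k * exp (a k \<bullet> x)" using Sig_split[of x] Sig0[of x] by simp
    also have "\<dots> \<le> \<bar>c k\<bar> * exp (a k \<bullet> x)" by (intro mult_right_mono) auto
    finally have "c i * exp (t * (d \<bullet> d)) \<le> \<bar>c k\<bar>"
      by (simp add: ai exp_add)
    moreover have "c i * (1 + t * (d \<bullet> d)) \<le> c i * exp (t * (d \<bullet> d))"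
      using ci by (intro mult_left_mono exp_ge_add_one_self) auto
    moreover have "c i * (1 + t * (d \<bullet> d)) = c i + \<bar>c k\<bar> + 1"
      using ci dd by (simp add: t_def field_simps)
    ultimately show False using ci by linarith
  qed
  then have "Sig m a c 0 = c k"
    unfolding Sig_def using k by (simp add: sum.remove[of "{..<m}" k])
  with Sig0[of 0] off show ?thesis by auto
qed

section \<open>Closedness of the SAGE cone\<close>

definition age_decomps :: "nat \<Rightarrow> (nat \<Rightarrow> real^'n) \<Rightarrow> (nat \<Rightarrow> nat \<Rightarrow> real) set" where
  "age_decomps m a = {cs. (\<forall>k<m. cs k \<in> C_AGE m a k) \<and> (\<forall>k\<ge>m. cs k = (\<lambda>i. 0))}"

definition row_sum :: "nat \<Rightarrow> (nat \<Rightarrow> nat \<Rightarrow> real) \<Rightarrow> nat \<Rightarrow> real" where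
  "row_sum m cs = (\<lambda>i. \<Sum>k<m. cs k i)"

definition l1norm :: "nat \<Rightarrow> (nat \<Rightarrow> real) \<Rightarrow> real" where
  "l1norm m x = (\<Sum>i<m. \<bar>x i\<bar>)"

definition decomp_norm :: "nat \<Rightarrow> (nat \<Rightarrow> nat \<Rightarrow> real) \<Rightarrow> real" where
  "decomp_norm m cs = (\<Sum>k<m. l1norm m (cs k))"

lemma C_SAGE_iff_age_decomps: "x \<in> C_SAGE m a \<longleftrightarrow> (\<exists>cs\<in>age_decomps m a. x = row_sum m cs)"
proof
  assume "x \<in> C_SAGE m a"
  then obtain cs where cs: "\<forall>k<m. cs k \<in> C_AGE m a k" and x: "x = (\<lambda>i. \<Sum>k<m. cs k i)"
    by (auto simp: C_SAGE_def)
  define cs' where "cs' = (\<lambda>k. if k < m then cs k else (\<lambda>i. 0))"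
  have "cs' \<in> age_decomps m a" "x = row_sum m cs'"
    using cs by (auto simp: cs'_def age_decomps_def x row_sum_def)
  then show "\<exists>cs\<in>age_decomps m a. x = row_sum m cs" by blast
qed (auto simp: C_SAGE_def age_decomps_def row_sum_def)

lemma age_decomps_add:
  "cs \<in> age_decomps m a \<Longrightarrow> ds \<in> age_decomps m a \<Longrightarrow> (\<lambda>k i. cs k i + ds k i) \<in> age_decomps m a"
  by (auto simp: age_decomps_def C_AGE_add)

lemma age_decomps_scale:
  "cs \<in> age_decomps m a \<Longrightarrow> r \<ge> 0 \<Longrightarrow> (\<lambda>k i. r * cs k i) \<in> age_decomps m a"
  by (auto simp: age_decomps_def C_AGE_scale)

lemma age_decomps_eq_Pi:
  "age_decomps m a = Pi UNIV (\<lambda>k. if k < m then C_AGE m a k else {\<lambda>i. 0})"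
proof (intro set_eqI iffI Pi_I)
  fix cs k assume "cs \<in> age_decomps m a"
  then show "cs k \<in> (if k < m then C_AGE m a k else {\<lambda>i. 0})"
    by (simp add: age_decomps_def)
next
  fix cs assume cs: "cs \<in> Pi UNIV (\<lambda>k. if k < m then C_AGE m a k else {\<lambda>i. 0})"
  have cs_k: "cs k \<in> (if k < m then C_AGE m a k else {\<lambda>i. 0})" for k
    using Pi_mem[OF cs] by simp
  show "cs \<in> age_decomps m a"
    unfolding age_decomps_def
  proof (intro CollectI conjI allI impI)
    fix k assume "k < m"
    with cs_k[of k] show "cs k \<in> C_AGE m a k" by simp
  next
    fix k assume "m \<le> k"
    with cs_k[of k] show "cs k = (\<lambda>i. 0)" by simp
  qed
qed

lemma closed_age_decomps: "closed (age_decomps m a)"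
proof -
  have "age_decomps m a = (\<Inter>k. (\<lambda>cs. cs k) -` (if k < m then C_AGE m a k else {\<lambda>i. 0}))"
    unfolding age_decomps_eq_Pi by (simp add: set_eq_iff Pi_iff)
  also have "closed \<dots>"
    by (intro closed_INT ballI closed_vimage continuous_intros) (simp add: closed_C_AGE)
  finally show ?thesis .
qed

lemma l1norm_nonneg: "l1norm m x \<ge> 0"
  unfolding l1norm_def by (intro sum_nonneg) auto

lemma decomp_norm_nonneg: "decomp_norm m cs \<ge> 0"
  unfolding decomp_norm_def by (intro sum_nonneg l1norm_nonneg)

lemma l1norm_scale: "l1norm m (\<lambda>i. r * x i) = \<bar>r\<bar> * l1norm m x"
  by (simp add: l1norm_def sum_distrib_left abs_mult)

lemma row_sum_scale: "row_sum m (\<lambda>k i. r * cs k i) = (\<lambda>i. r * row_sum m cs i)"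
  by (simp add: row_sum_def sum_distrib_left)

lemma decomp_norm_scale: "decomp_norm m (\<lambda>k i. r * cs k i) = \<bar>r\<bar> * decomp_norm m cs"
  by (simp add: decomp_norm_def l1norm_scale sum_distrib_left)

lemma continuous_on_l1norm [continuous_intros]: "continuous_on S (l1norm m)"
  unfolding l1norm_def by (intro continuous_intros)

lemma continuous_on_row_sum [continuous_intros]: "continuous_on S (row_sum m)"
  unfolding row_sum_def by (intro continuous_intros)

lemma continuous_on_decomp_norm [continuous_intros]: "continuous_on S (decomp_norm m)"
  unfolding decomp_norm_def l1norm_def by (intro continuous_intros)

lemma abs_le_decomp_norm:
  assumes "cs \<in> age_decomps m a" shows "\<bar>cs k i\<bar> \<le> decomp_norm m cs"
proof (cases "k < m \<and> i < m")
  case True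
  have "\<bar>cs k i\<bar> \<le> l1norm m (cs k)" unfolding l1norm_def
    by (rule member_le_sum[where f="\<lambda>i. \<bar>cs k i\<bar>"]) (use True in auto)
  also have "\<dots> \<le> decomp_norm m cs" unfolding decomp_norm_def
    by (rule member_le_sum[where f="\<lambda>k. l1norm m (cs k)"]) (use True l1norm_nonneg in auto)
  finally show ?thesis .
next
  case False
  have "cs k i = 0"
  proof (cases "k < m")
    case True
    then have "cs k \<in> Rm m" using assms by (simp add: age_decomps_def C_AGE_def C_NNS_def)
    with True False show ?thesis by (simp add: Rm_def)
  next
    case False
    then show ?thesis using assms by (simp add: age_decomps_def)
  qed
  then show ?thesis by (simp add: decomp_norm_nonneg)
qed

lemma compact_age_decomps_norm_le: "compact (age_decomps m a \<inter> {cs. decomp_norm m cs \<le> R})"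
proof (rule compact_if_closed_subset_Pi)
  show "closed (age_decomps m a \<inter> {cs. decomp_norm m cs \<le> R})"
    by (intro closed_Int closed_age_decomps closed_Collect_le continuous_intros)
  show "age_decomps m a \<inter> {cs. decomp_norm m cs \<le> R} \<subseteq> Pi UNIV (\<lambda>k. Pi UNIV (\<lambda>i. {-R..R}))"
  proof (intro subsetI Pi_I)
    fix cs k i assume "cs \<in> age_decomps m a \<inter> {cs. decomp_norm m cs \<le> R}"
    then show "cs k i \<in> {-R..R}" using abs_le_decomp_norm[of cs m a k i] by (auto simp: abs_le_iff)
  qed
qed (intro compact_Pi_UNIV compact_Icc)

lemma Sig_row_sum: "Sig m a (row_sum m cs) x = (\<Sum>k<m. Sig m a (cs k) x)"
  unfolding Sig_def row_sum_def by (simp add: sum_distrib_right) (rule sum.swap)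

lemma decomp_norm_eq_0_if_row_sum_eq_0:
  assumes inj: "inj_on a {..<m}" and cs: "cs \<in> age_decomps m a" and z: "\<forall>i<m. row_sum m cs i = 0"
  shows "decomp_norm m cs = 0"
proof -
  have nonneg: "0 \<le> Sig m a (cs k) x" if "k < m" for k x
    using cs that by (auto simp: age_decomps_def C_AGE_def C_NNS_def)
  have "(\<Sum>k<m. Sig m a (cs k) x) = 0" for x
    using z Sig_row_sum[of m a cs x] by (simp add: Sig_def)
  then have "Sig m a (cs k) x = 0" if "k < m" for k x
    using nonneg that by (subst (asm) sum_nonneg_eq_0_iff) auto
  then have "cs k i = 0" if "k < m" "i < m" for k i
    using C_AGE_zero_if_Sig_zero[OF inj] cs that by (auto simp: age_decomps_def)
  then show ?thesis by (simp add: decomp_norm_def l1norm_def)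
qed

text \<open>By homogeneity it suffices to bound \<open>l1norm \<circ> row_sum\<close> below on the compact slice
  \<open>decomp_norm = 1\<close>, where it is positive by pointedness.\<close>
lemma decomp_norm_le_row_sum:
  assumes inj: "inj_on a {..<m}"
  obtains \<delta> where "\<delta> > 0" "\<And>cs. cs \<in> age_decomps m a \<Longrightarrow> \<delta> * decomp_norm m cs \<le> l1norm m (row_sum m cs)"
proof -
  define S where "S = age_decomps m a \<inter> {cs. decomp_norm m cs = 1}"
  have "compact S"
  proof -
    have "S = age_decomps m a \<inter> {cs. decomp_norm m cs \<le> 1} \<inter> {cs. decomp_norm m cs = 1}"
      by (auto simp: S_def)
    also have "compact \<dots>"
      by (intro compact_Int_closed compact_age_decomps_norm_le closed_Collect_eq
          continuous_on_decomp_norm continuous_on_const)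
    finally show ?thesis .
  qed
  have normalized: "(\<lambda>k i. (1 / decomp_norm m cs) * cs k i) \<in> S"
    if cs: "cs \<in> age_decomps m a" and pos: "decomp_norm m cs > 0" for cs
    using age_decomps_scale[OF cs, of "1 / decomp_norm m cs"] decomp_norm_scale[of m "1 / decomp_norm m cs" cs] pos
    by (simp add: S_def)
  show ?thesis
  proof (cases "S = {}")
    case True
    then have "decomp_norm m cs = 0" if "cs \<in> age_decomps m a" for cs
      using normalized[OF that] decomp_norm_nonneg[of m cs] by fastforce
    then show ?thesis using l1norm_nonneg by (intro that[of 1]) auto
  next
    case False
    have cont: "continuous_on S (\<lambda>cs. l1norm m (row_sum m cs))"
      using continuous_on_compose[OF continuous_on_row_sum continuous_on_l1norm] by (simp add: o_def)
    obtain cs0 where cs0: "cs0 \<in> S" and min: "\<And>cs. cs \<in> S \<Longrightarrow> l1norm m (row_sum m cs0) \<le> l1norm m (row_sum m cs)"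
      using continuous_attains_inf[OF \<open>compact S\<close> False cont] by blast
    have "l1norm m (row_sum m cs0) \<noteq> 0"
    proof
      assume "l1norm m (row_sum m cs0) = 0"
      then have "\<forall>i<m. row_sum m cs0 i = 0"
        unfolding l1norm_def by (subst (asm) sum_nonneg_eq_0_iff) auto
      with cs0 decomp_norm_eq_0_if_row_sum_eq_0[OF inj] show False by (auto simp: S_def)
    qed
    then have pos: "l1norm m (row_sum m cs0) > 0" using l1norm_nonneg[of m "row_sum m cs0"] by linarith
    show ?thesis
    proof (rule that[OF pos])
      fix cs assume cs: "cs \<in> age_decomps m a"
      show "l1norm m (row_sum m cs0) * decomp_norm m cs \<le> l1norm m (row_sum m cs)"
      proof (cases "decomp_norm m cs = 0")
        case True then show ?thesis using l1norm_nonneg by simp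
      next
        case False
        then have dpos: "decomp_norm m cs > 0" using decomp_norm_nonneg[of m cs] by linarith
        have "l1norm m (row_sum m cs0) \<le> l1norm m (row_sum m (\<lambda>k i. (1 / decomp_norm m cs) * cs k i))"
          by (rule min[OF normalized[OF cs dpos]])
        also have "\<dots> = l1norm m (row_sum m cs) / decomp_norm m cs"
          unfolding row_sum_scale l1norm_scale using dpos by simp
        finally show ?thesis using dpos by (simp add: pos_le_divide_eq)
      qed
    qed
  qed
qed

lemma closed_C_SAGE:
  assumes inj: "inj_on a {..<m}"
  shows "closed (C_SAGE m a)"
proof (unfold closed_sequential_limits, intro allI impI, elim conjE)
  fix y l assume yK: "\<forall>n. y n \<in> C_SAGE m a" and lim: "y \<longlonglongrightarrow> l"
  obtain \<delta> where \<delta>: "\<delta> > 0" "\<And>cs. cs \<in> age_decomps m a \<Longrightarrow> \<delta> * decomp_norm m cs \<le> l1norm m (row_sum m cs)"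
    using decomp_norm_le_row_sum[OF inj] by blast
  from yK have "\<forall>n. \<exists>c\<in>age_decomps m a. y n = row_sum m c"
    unfolding C_SAGE_iff_age_decomps by blast
  then obtain cs where cs: "\<And>n. cs n \<in> age_decomps m a" "\<And>n. y n = row_sum m (cs n)"
    by metis
  have cont: "continuous_on UNIV (l1norm m)" "continuous_on UNIV (row_sum m)"
    by (rule continuous_on_l1norm continuous_on_row_sum)+
  have "(\<lambda>n. l1norm m (y n)) \<longlonglongrightarrow> l1norm m l"
    by (rule continuous_on_tendsto_compose[OF cont(1) lim]) auto
  then have "Bseq (\<lambda>n. l1norm m (y n))"
    by (intro convergent_imp_Bseq convergentI)
  then obtain B where B: "\<And>n. norm (l1norm m (y n)) \<le> B"
    by (metis BseqE)
  have bounded: "cs n \<in> age_decomps m a \<inter> {c. decomp_norm m c \<le> B / \<delta>}" for n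
  proof -
    have "\<delta> * decomp_norm m (cs n) \<le> l1norm m (y n)"
      using \<delta>(2)[OF cs(1)[of n]] cs(2)[of n] by simp
    also have "\<dots> \<le> B"
      using B[of n] by (simp add: abs_le_iff)
    finally show ?thesis using cs(1)[of n] \<delta>(1) by (simp add: pos_le_divide_eq mult.commute)
  qed
  obtain L r where L: "L \<in> age_decomps m a \<inter> {c. decomp_norm m c \<le> B / \<delta>}"
    and r: "strict_mono r" and lr: "(cs \<circ> r) \<longlonglongrightarrow> L"
    using seq_compactE[OF compact_imp_seq_compact[OF compact_age_decomps_norm_le], of cs m a "B / \<delta>"] bounded
    by blast
  have "(\<lambda>n. row_sum m ((cs \<circ> r) n)) \<longlonglongrightarrow> row_sum m L"
    by (rule continuous_on_tendsto_compose[OF cont(2) lr]) auto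
  moreover have "(\<lambda>n. row_sum m ((cs \<circ> r) n)) \<longlonglongrightarrow> l"
    using LIMSEQ_subseq_LIMSEQ[OF lim r] cs(2) by (simp add: comp_def)
  ultimately have "l = row_sum m L" using LIMSEQ_unique by blast
  with L show "l \<in> C_SAGE m a" unfolding C_SAGE_iff_age_decomps by blast
qed

lemma convex_cone_in_C_SAGE: "convex_cone_in m (C_SAGE m a)"
  unfolding convex_cone_in_def
proof (intro conjI ballI allI impI subsetI)
  fix x assume "x \<in> C_SAGE m a"
  then obtain cs where "cs \<in> age_decomps m a" "x = row_sum m cs"
    unfolding C_SAGE_iff_age_decomps by blast
  then show "x \<in> Rm m"
    by (auto simp: age_decomps_def C_AGE_def C_NNS_def Rm_def row_sum_def intro!: sum.neutral)
next
  have "(\<lambda>k i. 0) \<in> age_decomps m a" by (simp add: age_decomps_def C_AGE_zero)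
  then show "(\<lambda>i. 0) \<in> C_SAGE m a"
    unfolding C_SAGE_iff_age_decomps by (force simp: row_sum_def)
next
  fix x y assume "x \<in> C_SAGE m a" "y \<in> C_SAGE m a"
  then obtain cs ds where cs: "cs \<in> age_decomps m a" "x = row_sum m cs"
    and ds: "ds \<in> age_decomps m a" "y = row_sum m ds"
    unfolding C_SAGE_iff_age_decomps by blast
  then have "(\<lambda>k i. cs k i + ds k i) \<in> age_decomps m a" by (simp add: age_decomps_add)
  moreover have "(\<lambda>i. x i + y i) = row_sum m (\<lambda>k i. cs k i + ds k i)"
    using cs(2) ds(2) by (simp add: row_sum_def sum.distrib)
  ultimately show "(\<lambda>i. x i + y i) \<in> C_SAGE m a"
    unfolding C_SAGE_iff_age_decomps by blast
next
  fix x and r :: real assume "x \<in> C_SAGE m a" "0 \<le> r"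
  then obtain cs where cs: "cs \<in> age_decomps m a" "x = row_sum m cs"
    unfolding C_SAGE_iff_age_decomps by blast
  then have "(\<lambda>k i. r * cs k i) \<in> age_decomps m a" using \<open>0 \<le> r\<close> by (simp add: age_decomps_scale)
  moreover have "(\<lambda>i. r * x i) = row_sum m (\<lambda>k i. r * cs k i)"
    using cs(2) by (simp add: row_sum_scale)
  ultimately show "(\<lambda>i. r * x i) \<in> C_SAGE m a"
    unfolding C_SAGE_iff_age_decomps by blast
qed

lemma e1_in_C_SAGE:
  assumes "0 < m" shows "e1 \<in> C_SAGE m a"
proof -
  have "Sig m a e1 x = exp (a 0 \<bullet> x)" for x
    using sum_e1[OF assms, of "\<lambda>i. exp (a i \<bullet> x)"] by (simp add: Sig_def mult.commute)
  then have "e1 \<in> C_AGE m a 0" using assms by (auto simp: C_AGE_def C_NNS_def Rm_def e1_def)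
  then have "(\<lambda>i. if k = 0 then e1 i else 0) \<in> C_AGE m a k" for k
    by (cases "k = 0") (simp_all add: C_AGE_zero)
  then have "(\<lambda>k i. if k = 0 then e1 i else 0) \<in> age_decomps m a"
    using assms by (auto simp: age_decomps_def)
  moreover have "e1 = row_sum m (\<lambda>k i. if k = 0 then e1 i else 0)"
    using assms by (simp add: row_sum_def)
  ultimately show ?thesis unfolding C_SAGE_iff_age_decomps by blast
qed

text \<open>The all-ones vector pairs with \<open>c\<close> to \<open>Sig m a c 0\<close>.\<close>
lemma ones_in_dual_C_SAGE: "(\<lambda>i. if i < m then 1 else 0) \<in> dual_cone m (C_SAGE m a)"
proof -
  have "0 \<le> (\<Sum>i<m. (if i < m then 1 else 0) * y i)" if y: "y \<in> C_SAGE m a" for y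
  proof -
    obtain cs where cs: "cs \<in> age_decomps m a" "y = row_sum m cs"
      using y unfolding C_SAGE_iff_age_decomps by blast
    have "(\<Sum>i<m. (if i < m then 1 else 0) * y i) = (\<Sum>k<m. Sig m a (cs k) 0)"
      using Sig_row_sum[of m a cs 0] cs(2) by (simp add: Sig_def)
    also have "\<dots> \<ge> 0"
      using cs(1) by (intro sum_nonneg) (auto simp: age_decomps_def C_AGE_def C_NNS_def)
    finally show ?thesis .
  qed
  then show ?thesis by (auto simp: dual_cone_def Rm_def)
qed

text \<open>The hypothesis \<open>a 0 = 0\<close> only makes \<open>c - \<gamma> e1\<close> the coefficient vector of \<open>f - \<gamma>\<close>;
  the duality itself does not need it.\<close>
theorem mainTheorem1:
  fixes m :: nat and a :: "nat \<Rightarrow> real^'n" and c :: "nat \<Rightarrow> real"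
  assumes "0 < m"
    and "inj_on a {..<m}"
    and "a 0 = 0"
    and "c \<in> Rm m"
  shows "Sup {ereal \<gamma> | \<gamma>. (\<lambda>i. c i - \<gamma> * e1 i) \<in> C_SAGE m a}
       = Inf {ereal (\<Sum>i<m. c i * v i) | v. v \<in> dual_cone m (C_SAGE m a) \<and> v 0 = 1}"
  using closed_convex_cone_duality[OF assms(1) convex_cone_in_C_SAGE closed_C_SAGE[OF assms(2)]
      e1_in_C_SAGE[OF assms(1)] ones_in_dual_C_SAGE] assms(1,4)
  by simp

end
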